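(* Let $A=(a_0,\dots,a_r)$ be a complex $(c+1)\times(r+1)$ matrix of full rank with pairwise linearly independent columns. Then there exists a unique (up to order of summands) decomposition $\mathbb{C}^{c+1}=V_1\oplus\dots\oplus V_t$ into nonzero linear subspaces such that: (i) for each $0\le i\le r$ there is $j(i)\in\{1,\dots,t\}$ with $a_i\in V_{j(i)}$; (ii) whenever $\mathbb{C}^{c+1}=V'_1\oplus\dots\oplus V'_s$ is any decomposition into linear subspaces satisfying (i), then for every $1\le i\le t$ there is $1\le j\le s$ with $V_i\subseteq V'_j$. *)

theory Defs
  imports "HOL-Analysis.Analysis" "HOL-Library.Multiset"
begin

definition is_direct_sum_decomp :: "('a::field ^ 'n) set list \<Rightarrow> bool" where
  "is_direct_sum_decomp Vs \<longleftrightarrow>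
     (\<forall>V \<in> set Vs. vec.subspace V) \<and>
     (\<forall>v. \<exists>!u :: nat \<Rightarrow> 'a ^ 'n.
            (\<forall>j < length Vs. u j \<in> Vs ! j) \<and> (\<forall>j \<ge> length Vs. u j = 0) \<and>
            v = (\<Sum>j < length Vs. u j))"

definition columns_in_summands :: "'a::field ^ 'm ^ 'n \<Rightarrow> ('a ^ 'n) set list \<Rightarrow> bool" where
  "columns_in_summands A Vs \<longleftrightarrow> (\<forall>i. \<exists>V \<in> set Vs. column i A \<in> V)"

end

theory Submission
  imports Defs
begin

(* Call a direct sum decomposition adapted to a set S of vectors if every element of S lies
   in one of the summands. If S spans the space, two adapted decompositions (V_i) and (W_j)
   have the common adapted refinement (V_i \<inter> W_j): the pieces contain S, hence span, and
   their sum is direct because both families are independent. A nonzero summand of an adapted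
   decomposition contains a nonzero element of S, so there are at most |S| nonzero summands.
   Take an adapted decomposition with the largest number of nonzero summands V_i. Refining it
   by any adapted (W_j) yields no more nonzero pieces, while each V_i is the sum of its pieces
   V_i \<inter> W_j and so has at least one nonzero piece; hence each V_i has exactly one, and lies
   in the corresponding W_j. Two such finest decompositions refine each other, and a nonzero
   summand of a direct sum is contained in no other summand, so they have the same summands. *)

section \<open>Direct sums of finite families of subspaces\<close>

(* Indexed by an arbitrary finite set, so that a common refinement can be indexed by pairs. *)
definition internal_direct_sum :: "'i set \<Rightarrow> ('i \<Rightarrow> ('a::field ^ 'n) set) \<Rightarrow> bool" where
  "internal_direct_sum I V \<longleftrightarrow> finite I \<and> (\<forall>i\<in>I. vec.subspace (V i)) \<and>
     (\<forall>v. \<exists>u. (\<forall>i\<in>I. u i \<in> V i) \<and> v = (\<Sum>i\<in>I. u i)) \<and>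
     (\<forall>u. (\<forall>i\<in>I. u i \<in> V i) \<and> (\<Sum>i\<in>I. u i) = 0 \<longrightarrow> (\<forall>i\<in>I. u i = 0))"

lemma internal_direct_sumD:
  assumes "internal_direct_sum I V"
  shows internal_direct_sum_finite: "finite I"
    and internal_direct_sum_subspace: "i \<in> I \<Longrightarrow> vec.subspace (V i)"
  using assms unfolding internal_direct_sum_def by blast+

lemma internal_direct_sum_decompose:
  assumes "internal_direct_sum I V"
  obtains u where "\<And>i. i \<in> I \<Longrightarrow> u i \<in> V i" "v = (\<Sum>i\<in>I. u i)"
  using assms unfolding internal_direct_sum_def by blast

lemma internal_direct_sum_sum_eq_0:
  assumes "internal_direct_sum I V" "\<And>i. i \<in> I \<Longrightarrow> u i \<in> V i" "(\<Sum>i\<in>I. u i) = 0" "i \<in> I"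
  shows "u i = 0"
  using assms unfolding internal_direct_sum_def by blast

lemma internal_direct_sum_components_unique:
  assumes V: "internal_direct_sum I V"
    and a: "\<And>i. i \<in> I \<Longrightarrow> a i \<in> V i" and b: "\<And>i. i \<in> I \<Longrightarrow> b i \<in> V i"
    and "(\<Sum>i\<in>I. a i) = (\<Sum>i\<in>I. b i)" "i \<in> I"
  shows "a i = b i"
proof -
  have "a i - b i = 0"
    using internal_direct_sum_sum_eq_0[OF V, of "\<lambda>i. a i - b i"] assms
    by (auto simp: sum_subtractf intro: vec.subspace_diff internal_direct_sum_subspace[OF V])
  then show ?thesis by simp
qed

lemma internal_direct_sum_summands_disjoint:
  assumes V: "internal_direct_sum I V" and "j \<in> I" "k \<in> I" "j \<noteq> k" "v \<in> V j" "v \<in> V k"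
  shows "v = 0"
proof -
  have "(\<lambda>i. if i = j then v else 0) j = (\<lambda>i. if i = k then v else 0) j"
    by (rule internal_direct_sum_components_unique[OF V])
      (use assms internal_direct_sumD[OF V] in \<open>auto intro: vec.subspace_0\<close>)
  then show ?thesis using assms by simp
qed

lemma internal_direct_sum_nonzero_summand:
  fixes V :: "'i \<Rightarrow> ('a::field ^ 'n) set"
  assumes V: "internal_direct_sum I V"
  obtains i where "i \<in> I" "V i \<noteq> {0}"
proof -
  have "\<not> (\<forall>i\<in>I. V i = {0})"
  proof
    assume zero: "\<forall>i\<in>I. V i = {0}"
    obtain u where "\<And>i. i \<in> I \<Longrightarrow> u i \<in> V i" "(1 :: 'a ^ 'n) = (\<Sum>i\<in>I. u i)"
      using internal_direct_sum_decompose[OF V] by metis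
    with zero have "(1 :: 'a ^ 'n) = 0" by simp
    then show False by (simp add: vec_eq_iff)
  qed
  with that show thesis by blast
qed

lemma span_UN_subspaces:
  assumes "finite I" and sub: "\<And>i. i \<in> I \<Longrightarrow> vec.subspace (V i)"
    and "x \<in> vec.span (\<Union>i\<in>I. V i)"
  shows "\<exists>u. (\<forall>i\<in>I. u i \<in> V i) \<and> x = (\<Sum>i\<in>I. u i)"
  using assms(3)
proof (induction rule: vec.span_induct_alt)
  case base
  show ?case by (intro exI[of _ "\<lambda>_. 0"]) (simp add: sub vec.subspace_0)
next
  case (step c x y)
  obtain k where k: "k \<in> I" "x \<in> V k" using step.hyps by blast
  obtain u where u: "\<forall>i\<in>I. u i \<in> V i" "y = (\<Sum>i\<in>I. u i)" using step.IH by blast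
  let ?w = "\<lambda>i. u i + (if i = k then c *s x else 0)"
  have "\<forall>i\<in>I. ?w i \<in> V i"
    using u k sub by (auto intro: vec.subspace_add vec.subspace_scale vec.subspace_0)
  moreover have "c *s x + y = (\<Sum>i\<in>I. ?w i)"
    using k \<open>finite I\<close> by (simp add: sum.distrib u(2))
  ultimately show ?case by (intro exI[of _ ?w]) simp
qed

lemma internal_direct_sum_summand_inter_span_others:
  assumes V: "internal_direct_sum I V" and j: "j \<in> I" "x \<in> V j"
    and "x \<in> vec.span (\<Union>i\<in>I - {j}. V i)"
  shows "x = 0"
proof -
  note fin = internal_direct_sum_finite[OF V] and sub = internal_direct_sum_subspace[OF V]
  obtain u where u: "\<forall>i\<in>I - {j}. u i \<in> V i" "x = (\<Sum>i\<in>I - {j}. u i)"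
    using span_UN_subspaces[of "I - {j}" V x] assms fin sub by blast
  let ?a = "\<lambda>i. if i = j then x else 0" and ?b = "\<lambda>i. if i = j then 0 else u i"
  have a: "?a i \<in> V i" and b: "?b i \<in> V i" if "i \<in> I" for i
    using that j u(1) sub by (auto intro: vec.subspace_0)
  have "(\<Sum>i\<in>I. ?a i) = (\<Sum>i\<in>I. ?b i)"
    using fin j u(2) by (simp add: sum.remove)
  then have "?a j = ?b j"
    using internal_direct_sum_components_unique[OF V a b] j by blast
  then show ?thesis by simp
qed

lemma is_direct_sum_decomp_iff:
  "is_direct_sum_decomp Vs \<longleftrightarrow> internal_direct_sum {..<length Vs} ((!) Vs)"
proof
  assume Vs: "is_direct_sum_decomp Vs"
  let ?n = "length Vs"
  have sub: "vec.subspace (Vs ! j)" if "j < ?n" for j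
    using Vs that unfolding is_direct_sum_decomp_def by auto
  let ?P = "\<lambda>v u. (\<forall>j<?n. u j \<in> Vs ! j) \<and> (\<forall>j\<ge>?n. u j = 0) \<and> v = (\<Sum>j<?n. u j)"
  have unique: "a = b" if "?P v a" "?P v b" for v a b
    using Vs that unfolding is_direct_sum_decomp_def by blast
  have ex: "\<exists>u. (\<forall>j\<in>{..<?n}. u j \<in> Vs ! j) \<and> v = (\<Sum>j<?n. u j)" for v
    using Vs unfolding is_direct_sum_decomp_def lessThan_iff by blast
  have zero: "u j = 0"
    if u: "\<forall>j\<in>{..<?n}. u j \<in> Vs ! j" "(\<Sum>j<?n. u j) = 0" and j: "j < ?n" for u j
  proof -
    let ?u = "\<lambda>j. if j < ?n then u j else 0"
    have "?P 0 ?u" using u by simp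
    moreover have "?P 0 (\<lambda>_. 0)" using sub by (simp add: vec.subspace_0)
    ultimately have "?u = (\<lambda>_. 0)" by (rule unique)
    then show ?thesis using fun_cong[of ?u _ j] j by simp
  qed
  show "internal_direct_sum {..<?n} ((!) Vs)"
    unfolding internal_direct_sum_def using sub ex zero by auto
next
  assume Vs: "internal_direct_sum {..<length Vs} ((!) Vs)"
  let ?n = "length Vs"
  have "\<exists>!u. (\<forall>j<?n. u j \<in> Vs ! j) \<and> (\<forall>j\<ge>?n. u j = 0) \<and> v = (\<Sum>j<?n. u j)" for v
  proof -
    obtain u where u: "\<And>j. j < ?n \<Longrightarrow> u j \<in> Vs ! j" "v = (\<Sum>j<?n. u j)"
      using internal_direct_sum_decompose[OF Vs] by (metis lessThan_iff)
    let ?u = "\<lambda>j. if j < ?n then u j else 0"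
    show ?thesis
    proof (rule ex1I[of _ ?u])
      show "(\<forall>j<?n. ?u j \<in> Vs ! j) \<and> (\<forall>j\<ge>?n. ?u j = 0) \<and> v = (\<Sum>j<?n. ?u j)"
        using u by simp
    next
      fix w assume w: "(\<forall>j<?n. w j \<in> Vs ! j) \<and> (\<forall>j\<ge>?n. w j = 0) \<and> v = (\<Sum>j<?n. w j)"
      show "w = ?u"
      proof
        fix j
        show "w j = ?u j"
          using internal_direct_sum_components_unique[OF Vs, of w u j] w u by (cases "j < ?n") auto
      qed
    qed
  qed
  moreover have "\<forall>V\<in>set Vs. vec.subspace V"
    using internal_direct_sum_subspace[OF Vs] by (auto simp: in_set_conv_nth)
  ultimately show "is_direct_sum_decomp Vs"
    unfolding is_direct_sum_decomp_def by blast
qed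

lemma internal_direct_sum_reindex:
  assumes V: "internal_direct_sum I V" and g: "bij_betw g J I" and W: "\<And>j. j \<in> J \<Longrightarrow> W j = V (g j)"
  shows "internal_direct_sum J W"
proof -
  have fin: "finite J" using bij_betw_finite[OF g] internal_direct_sum_finite[OF V] by blast
  have sub: "\<forall>j\<in>J. vec.subspace (W j)"
    using internal_direct_sum_subspace[OF V] bij_betw_apply[OF g] W by simp
  have "\<exists>w. (\<forall>j\<in>J. w j \<in> W j) \<and> v = (\<Sum>j\<in>J. w j)" for v
  proof -
    obtain u where u: "\<And>i. i \<in> I \<Longrightarrow> u i \<in> V i" "v = (\<Sum>i\<in>I. u i)"
      using internal_direct_sum_decompose[OF V] by metis
    have "v = (\<Sum>j\<in>J. u (g j))" using u(2) sum.reindex_bij_betw[OF g, of u] by simp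
    then show ?thesis using u(1) bij_betw_apply[OF g] W by (intro exI[of _ "u \<circ> g"]) auto
  qed
  moreover have "\<forall>j\<in>J. w j = 0"
    if w: "\<forall>j\<in>J. w j \<in> W j" "(\<Sum>j\<in>J. w j) = 0" for w
  proof
    fix j assume j: "j \<in> J"
    let ?u = "w \<circ> inv_into J g"
    have ug: "?u (g j) = w j" if "j \<in> J" for j
      using g that by (simp add: bij_betw_def inv_into_f_f)
    have "?u i \<in> V i" if "i \<in> I" for i
    proof -
      obtain j' where "j' \<in> J" "i = g j'" using g \<open>i \<in> I\<close> by (auto simp: bij_betw_def)
      then show ?thesis using w(1) W ug by auto
    qed
    moreover have "(\<Sum>i\<in>I. ?u i) = 0"
      using w(2) ug sum.reindex_bij_betw[OF g, of ?u] by simp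
    ultimately have "?u (g j) = 0"
      using internal_direct_sum_sum_eq_0[OF V, of ?u] bij_betw_apply[OF g j] by blast
    then show "w j = 0" using ug j by simp
  qed
  ultimately show ?thesis unfolding internal_direct_sum_def using fin sub by simp
qed

lemma is_direct_sum_decomp_map:
  assumes "internal_direct_sum (set xs) V" "distinct xs"
  shows "is_direct_sum_decomp (map V xs)"
  unfolding is_direct_sum_decomp_iff length_map
  by (rule internal_direct_sum_reindex[OF assms(1) bij_betw_nth[OF assms(2) refl refl]]) simp

lemma is_direct_sum_decomp_summand_subset_imp_eq:
  assumes "is_direct_sum_decomp Vs" "j < length Vs" "k < length Vs"
    and "Vs ! j \<noteq> {0}" "Vs ! j \<subseteq> Vs ! k"
  shows "j = k"
proof (rule ccontr)
  assume "j \<noteq> k"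
  note V = assms(1)[unfolded is_direct_sum_decomp_iff]
  obtain x where "x \<in> Vs ! j" "x \<noteq> 0"
    using assms(2,4) internal_direct_sum_subspace[OF V] vec.subspace_0 by blast
  with internal_direct_sum_summands_disjoint[OF V] assms(2,3,5) \<open>j \<noteq> k\<close> show False by blast
qed

lemma internal_direct_sum_drop_zero:
  assumes V: "internal_direct_sum I V" and "J \<subseteq> I" and zero: "\<And>i. i \<in> I - J \<Longrightarrow> V i = {0}"
  shows "internal_direct_sum J V"
proof -
  have finI: "finite I" using internal_direct_sum_finite[OF V] .
  have fin: "finite J" using finite_subset[OF \<open>J \<subseteq> I\<close> finI] .
  have sub: "\<forall>j\<in>J. vec.subspace (V j)" using internal_direct_sum_subspace[OF V] \<open>J \<subseteq> I\<close> by blast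
  have "\<exists>w. (\<forall>j\<in>J. w j \<in> V j) \<and> v = (\<Sum>j\<in>J. w j)" for v
  proof -
    obtain u where u: "\<And>i. i \<in> I \<Longrightarrow> u i \<in> V i" "v = (\<Sum>i\<in>I. u i)"
      using internal_direct_sum_decompose[OF V] by metis
    have "(\<Sum>i\<in>I. u i) = (\<Sum>i\<in>J. u i)"
      using u(1) zero by (intro sum.mono_neutral_right[OF finI \<open>J \<subseteq> I\<close>]) blast
    then show ?thesis using u \<open>J \<subseteq> I\<close> by auto
  qed
  moreover have "\<forall>j\<in>J. w j = 0" if w: "\<forall>j\<in>J. w j \<in> V j" "(\<Sum>j\<in>J. w j) = 0" for w
  proof
    fix j assume "j \<in> J"
    let ?u = "\<lambda>i. if i \<in> J then w i else 0"
    have "(\<Sum>i\<in>I. ?u i) = 0"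
      using w(2) finI \<open>J \<subseteq> I\<close> by (simp add: sum.If_cases Int_absorb1)
    moreover have "?u i \<in> V i" if "i \<in> I" for i
      using w(1) zero that by auto
    ultimately have "?u j = 0"
      using internal_direct_sum_sum_eq_0[OF V, of ?u] \<open>j \<in> J\<close> \<open>J \<subseteq> I\<close> by blast
    then show "w j = 0" using \<open>j \<in> J\<close> by simp
  qed
  ultimately show ?thesis unfolding internal_direct_sum_def using fin sub by simp
qed

lemma internal_direct_sum_summand_meets_spanning_set:
  assumes span: "vec.span S = UNIV" and V: "internal_direct_sum I V"
    and SV: "\<forall>x\<in>S. \<exists>i\<in>I. x \<in> V i" and j: "j \<in> I" "V j \<noteq> {0}"
  obtains x where "x \<in> S" "x \<in> V j" "x \<noteq> 0"
proof -
  have "\<exists>x\<in>S. x \<in> V j \<and> x \<noteq> 0"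
  proof (rule ccontr)
    assume "\<not> ?thesis"
    then have "S \<subseteq> vec.span (\<Union>i\<in>I - {j}. V i)"
      using SV by (fastforce intro: vec.span_base vec.span_zero)
    then have others: "vec.span (\<Union>i\<in>I - {j}. V i) = UNIV"
      using span vec.span_minimal[of S] vec.subspace_span by blast
    obtain y where "y \<in> V j" "y \<noteq> 0"
      using j internal_direct_sum_subspace[OF V j(1)] vec.subspace_0 by blast
    with internal_direct_sum_summand_inter_span_others[OF V j(1)] others show False by blast
  qed
  with that show thesis by blast
qed

lemma internal_direct_sum_refine:
  assumes span: "vec.span S = UNIV"
    and V: "internal_direct_sum I V" and SV: "\<forall>x\<in>S. \<exists>i\<in>I. x \<in> V i"
    and W: "internal_direct_sum J W" and SW: "\<forall>x\<in>S. \<exists>j\<in>J. x \<in> W j"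
  shows "internal_direct_sum (I \<times> J) (\<lambda>(i, j). V i \<inter> W j)"
proof -
  let ?h = "\<lambda>(i, j). V i \<inter> W j"
  have fin: "finite (I \<times> J)"
    using internal_direct_sum_finite[OF V] internal_direct_sum_finite[OF W] by simp
  have sub: "\<forall>p\<in>I \<times> J. vec.subspace (?h p)"
    using internal_direct_sum_subspace[OF V] internal_direct_sum_subspace[OF W]
    by (auto intro: vec.subspace_inter)
  have "S \<subseteq> (\<Union>p\<in>I \<times> J. ?h p)" using SV SW by fast
  then have "vec.span (\<Union>p\<in>I \<times> J. ?h p) = UNIV"
    using span vec.span_mono by blast
  then have "\<exists>u. (\<forall>p\<in>I \<times> J. u p \<in> ?h p) \<and> v = (\<Sum>p\<in>I \<times> J. u p)" for v
    using span_UN_subspaces[OF fin, of ?h v] sub by blast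
  moreover have "\<forall>p\<in>I \<times> J. u p = 0"
    if u: "\<forall>p\<in>I \<times> J. u p \<in> ?h p" "(\<Sum>p\<in>I \<times> J. u p) = 0" for u
  proof (clarify)
    fix i j assume ij: "i \<in> I" "j \<in> J"
    have "(\<Sum>k\<in>I. \<Sum>l\<in>J. u (k, l)) = 0" using u(2) by (simp add: sum.cartesian_product)
    moreover have "(\<Sum>l\<in>J. u (k, l)) \<in> V k" if "k \<in> I" for k
      using u(1) that by (auto intro: vec.subspace_sum internal_direct_sum_subspace[OF V])
    ultimately have "(\<Sum>l\<in>J. u (i, l)) = 0"
      using internal_direct_sum_sum_eq_0[OF V, of "\<lambda>k. \<Sum>l\<in>J. u (k, l)"] ij by blast
    then show "u (i, j) = 0"
      using internal_direct_sum_sum_eq_0[OF W, of "\<lambda>l. u (i, l)"] u(1) ij by blast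
  qed
  ultimately show ?thesis unfolding internal_direct_sum_def using fin sub by simp
qed

lemma internal_direct_sum_summand_subset_span_pieces:
  assumes V: "internal_direct_sum I V" and R: "internal_direct_sum (I \<times> J) (\<lambda>(i, j). V i \<inter> W j)"
    and i: "i \<in> I"
  shows "V i \<subseteq> vec.span (\<Union>j\<in>{j\<in>J. V i \<inter> W j \<noteq> {0}}. V i \<inter> W j)"
proof
  fix v assume v: "v \<in> V i"
  obtain u where u: "\<And>p. p \<in> I \<times> J \<Longrightarrow> u p \<in> (\<lambda>(i, j). V i \<inter> W j) p"
    "v = (\<Sum>p\<in>I \<times> J. u p)"
    using internal_direct_sum_decompose[OF R] by metis
  have rows: "(\<Sum>l\<in>J. u (k, l)) \<in> V k" if "k \<in> I" for k
    using u(1) that by (auto intro: vec.subspace_sum internal_direct_sum_subspace[OF V])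
  have delta: "(if k = i then v else 0) \<in> V k" if "k \<in> I" for k
    using v that by (auto intro: vec.subspace_0 internal_direct_sum_subspace[OF V])
  have "(\<Sum>k\<in>I. \<Sum>l\<in>J. u (k, l)) = (\<Sum>k\<in>I. if k = i then v else 0)"
    using u(2) i internal_direct_sum_finite[OF V] by (simp add: sum.cartesian_product)
  then have "v = (\<Sum>l\<in>J. u (i, l))"
    using internal_direct_sum_components_unique[OF V rows delta _ i] by simp
  also have "\<dots> \<in> vec.span (\<Union>j\<in>{j\<in>J. V i \<inter> W j \<noteq> {0}}. V i \<inter> W j)"
  proof (rule vec.span_sum)
    fix l assume "l \<in> J"
    have piece: "u (i, l) \<in> V i \<inter> W l" using u(1) i \<open>l \<in> J\<close> by fastforce
    show "u (i, l) \<in> vec.span (\<Union>j\<in>{j\<in>J. V i \<inter> W j \<noteq> {0}}. V i \<inter> W j)"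
    proof (cases "V i \<inter> W l = {0}")
      case True
      then show ?thesis using piece by (simp add: vec.span_zero)
    next
      case False
      then show ?thesis using piece \<open>l \<in> J\<close> by (blast intro: vec.span_base)
    qed
  qed
  finally show "v \<in> vec.span (\<Union>j\<in>{j\<in>J. V i \<inter> W j \<noteq> {0}}. V i \<inter> W j)" .
qed

section \<open>Decompositions adapted to a spanning set\<close>

definition adapted_decomp :: "('a::field ^ 'n) set \<Rightarrow> ('a ^ 'n) set list \<Rightarrow> bool" where
  "adapted_decomp S Vs \<longleftrightarrow> is_direct_sum_decomp Vs \<and> (\<forall>x\<in>S. \<exists>V\<in>set Vs. x \<in> V)"

definition finest_adapted_decomp :: "('a::field ^ 'n) set \<Rightarrow> ('a ^ 'n) set list \<Rightarrow> bool" where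
  "finest_adapted_decomp S Vs \<longleftrightarrow> adapted_decomp S Vs \<and> (\<forall>V\<in>set Vs. V \<noteq> {0}) \<and>
     (\<forall>Ws. adapted_decomp S Ws \<longrightarrow> (\<forall>V\<in>set Vs. \<exists>W\<in>set Ws. V \<subseteq> W))"

lemma adapted_decompD:
  assumes "adapted_decomp S Vs"
  shows "internal_direct_sum {..<length Vs} ((!) Vs)" and "\<forall>x\<in>S. \<exists>i\<in>{..<length Vs}. x \<in> Vs ! i"
  using assms unfolding adapted_decomp_def is_direct_sum_decomp_iff
  by (metis in_set_conv_nth lessThan_iff)+

lemma adapted_decomp_UNIV: "adapted_decomp S [UNIV]"
  unfolding adapted_decomp_def is_direct_sum_decomp_iff internal_direct_sum_def
  by (auto simp: vec.subspace_UNIV)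

lemma adapted_decomp_length_le_card:
  assumes "finite S" "vec.span S = UNIV" "adapted_decomp S Vs" and nz: "\<forall>V\<in>set Vs. V \<noteq> {0}"
  shows "length Vs \<le> card S"
proof -
  note V = adapted_decompD[OF assms(3)]
  have "\<exists>x. x \<in> S \<and> x \<in> Vs ! j \<and> x \<noteq> 0" if "j < length Vs" for j
  proof -
    have "j \<in> {..<length Vs}" "Vs ! j \<noteq> {0}" using that nz by auto
    then obtain x where "x \<in> S" "x \<in> Vs ! j" "x \<noteq> 0"
      by (rule internal_direct_sum_summand_meets_spanning_set[OF assms(2) V])
    then show ?thesis by blast
  qed
  then obtain x where x: "\<And>j. j < length Vs \<Longrightarrow> x j \<in> S \<and> x j \<in> Vs ! j \<and> x j \<noteq> 0"
    by metis
  have "inj_on x {..<length Vs}"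
    using x internal_direct_sum_summands_disjoint[OF V(1)] by (intro inj_onI) (metis lessThan_iff)
  moreover have "x ` {..<length Vs} \<subseteq> S" using x by auto
  ultimately show ?thesis using card_inj_on_le[OF _ _ \<open>finite S\<close>] by fastforce
qed

lemma adapted_decomp_refinement:
  assumes span: "vec.span S = UNIV" and Vs: "adapted_decomp S Vs" and Ws: "adapted_decomp S Ws"
  obtains Us where "adapted_decomp S Us" "\<forall>U\<in>set Us. U \<noteq> {0}"
    "length Us = card {(i, j) \<in> {..<length Vs} \<times> {..<length Ws}. Vs ! i \<inter> Ws ! j \<noteq> {0}}"
proof -
  let ?h = "\<lambda>(i, j). Vs ! i \<inter> Ws ! j"
  define K where "K = {(i, j) \<in> {..<length Vs} \<times> {..<length Ws}. Vs ! i \<inter> Ws ! j \<noteq> {0}}"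
  have "internal_direct_sum ({..<length Vs} \<times> {..<length Ws}) ?h"
    using internal_direct_sum_refine[OF span adapted_decompD[OF Vs] adapted_decompD[OF Ws]] .
  then have K: "internal_direct_sum K ?h"
    by (rule internal_direct_sum_drop_zero) (auto simp: K_def)
  obtain xs where xs: "set xs = K" "distinct xs"
    using finite_distinct_list[OF internal_direct_sum_finite[OF K]] by blast
  have "\<exists>U\<in>set (map ?h xs). x \<in> U" if "x \<in> S" for x
  proof -
    obtain i j where ij: "i < length Vs" "j < length Ws" "x \<in> Vs ! i" "x \<in> Ws ! j"
      using adapted_decompD(2)[OF Vs] adapted_decompD(2)[OF Ws] \<open>x \<in> S\<close> by blast
    show ?thesis
    proof (cases "(i, j) \<in> K")
      case True
      then show ?thesis using ij xs(1) by force
    next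
      case False
      then have "x = 0" using ij by (auto simp: K_def)
      obtain p where "p \<in> K" "?h p \<noteq> {0}" by (rule internal_direct_sum_nonzero_summand[OF K])
      then show ?thesis
        using \<open>x = 0\<close> xs(1) internal_direct_sum_subspace[OF K] vec.subspace_0 by force
    qed
  qed
  moreover have "is_direct_sum_decomp (map ?h xs)"
    using is_direct_sum_decomp_map[OF _ xs(2)] K xs(1) by blast
  moreover have "\<forall>U\<in>set (map ?h xs). U \<noteq> {0}" using xs(1) by (auto simp: K_def)
  moreover have "length (map ?h xs) = card K" using distinct_card[OF xs(2)] xs(1) by simp
  ultimately show ?thesis using that unfolding adapted_decomp_def K_def by blast
qed

lemma adapted_decomp_summand_subset_if_pieces_subset:
  assumes span: "vec.span S = UNIV" and Vs: "adapted_decomp S Vs" and Ws: "adapted_decomp S Ws"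
    and "i < length Vs" and J: "{j \<in> {..<length Ws}. Vs ! i \<inter> Ws ! j \<noteq> {0}} \<subseteq> J"
  shows "Vs ! i \<subseteq> vec.span (\<Union>j\<in>J. Ws ! j)"
proof -
  have "Vs ! i \<subseteq> vec.span (\<Union>j\<in>{j \<in> {..<length Ws}. Vs ! i \<inter> Ws ! j \<noteq> {0}}. Vs ! i \<inter> Ws ! j)"
    by (rule internal_direct_sum_summand_subset_span_pieces[OF adapted_decompD(1)[OF Vs]
          internal_direct_sum_refine[OF span adapted_decompD[OF Vs] adapted_decompD[OF Ws]]])
      (use \<open>i < length Vs\<close> in simp)
  also have "\<dots> \<subseteq> vec.span (\<Union>j\<in>J. Ws ! j)"
    using J by (intro vec.span_mono) blast
  finally show ?thesis .
qed

lemma card_less_card_if_fst_covers: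
  assumes "finite K" "I \<subseteq> fst ` K" "(i, j1) \<in> K" "(i, j2) \<in> K" "j1 \<noteq> j2"
  shows "card I < card K"
proof -
  have "\<not> inj_on fst K" using inj_onD[of fst K "(i, j1)" "(i, j2)"] assms(3-5) by auto
  then have "card (fst ` K) < card K"
    using card_image_le[OF assms(1)] inj_on_iff_eq_card[OF assms(1)] by (metis le_neq_implies_less)
  moreover have "card I \<le> card (fst ` K)" using assms(1,2) by (simp add: card_mono)
  ultimately show ?thesis by linarith
qed

lemma adapted_decomp_length_less_card_pieces:
  assumes span: "vec.span S = UNIV"
    and Vs: "adapted_decomp S Vs" "\<forall>V\<in>set Vs. V \<noteq> {0}" and Ws: "adapted_decomp S Ws"
    and "V \<in> set Vs" "\<not> (\<exists>W\<in>set Ws. V \<subseteq> W)"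
  shows "length Vs < card {(i, j) \<in> {..<length Vs} \<times> {..<length Ws}. Vs ! i \<inter> Ws ! j \<noteq> {0}}"
    (is "_ < card ?K")
proof -
  define P where "P k = {j \<in> {..<length Ws}. Vs ! k \<inter> Ws ! j \<noteq> {0}}" for k
  note pieces = adapted_decomp_summand_subset_if_pieces_subset[OF span Vs(1) Ws, folded P_def]
  have P_nonempty: "P k \<noteq> {}" if "k < length Vs" for k
  proof
    assume "P k = {}"
    with pieces[OF that, of "{}"] have "Vs ! k \<subseteq> {0}" by simp
    moreover have "0 \<in> Vs ! k"
      using internal_direct_sum_subspace[OF adapted_decompD(1)[OF Vs(1)]] that
      by (simp add: vec.subspace_0)
    moreover have "Vs ! k \<noteq> {0}" using Vs(2) that by simp
    ultimately show False by blast
  qed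
  obtain i where i: "i < length Vs" "V = Vs ! i" using \<open>V \<in> set Vs\<close> by (auto simp: in_set_conv_nth)
  obtain j1 where j1: "j1 \<in> P i" using P_nonempty[OF i(1)] by blast
  obtain j2 where j2: "j2 \<in> P i" "j2 \<noteq> j1"
  proof -
    have "\<not> P i \<subseteq> {j1}"
    proof
      assume "P i \<subseteq> {j1}"
      with pieces[OF i(1), of "{j1}"] have "V \<subseteq> vec.span (Ws ! j1)" using i(2) by simp
      also have "\<dots> = Ws ! j1"
        using internal_direct_sum_subspace[OF adapted_decompD(1)[OF Ws]] j1 by (simp add: P_def)
      finally show False using assms(6) j1 by (auto simp: P_def)
    qed
    with that show thesis by blast
  qed
  have "{..<length Vs} \<subseteq> fst ` ?K"
  proof
    fix k assume k: "k \<in> {..<length Vs}"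
    then obtain j where "j \<in> P k" using P_nonempty by blast
    with k have "(k, j) \<in> ?K" by (simp add: P_def)
    then show "k \<in> fst ` ?K" by force
  qed
  moreover have "finite ?K"
    by (rule finite_subset[of _ "{..<length Vs} \<times> {..<length Ws}"]) auto
  ultimately show ?thesis
    using card_less_card_if_fst_covers[of ?K "{..<length Vs}" i j1 j2] i(1) j1 j2
    by (simp add: P_def)
qed

lemma adapted_decomp_max_length_summand_subset:
  assumes span: "vec.span S = UNIV"
    and Vs: "adapted_decomp S Vs" "\<forall>V\<in>set Vs. V \<noteq> {0}"
    and max: "\<And>Us. adapted_decomp S Us \<Longrightarrow> \<forall>U\<in>set Us. U \<noteq> {0} \<Longrightarrow> length Us \<le> length Vs"
    and Ws: "adapted_decomp S Ws" and "V \<in> set Vs"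
  shows "\<exists>W\<in>set Ws. V \<subseteq> W"
proof (rule ccontr)
  assume not_in: "\<not> (\<exists>W\<in>set Ws. V \<subseteq> W)"
  obtain Us where Us: "adapted_decomp S Us" "\<forall>U\<in>set Us. U \<noteq> {0}"
    and "length Us = card {(i, j) \<in> {..<length Vs} \<times> {..<length Ws}. Vs ! i \<inter> Ws ! j \<noteq> {0}}"
    by (rule adapted_decomp_refinement[OF span Vs(1) Ws])
  with adapted_decomp_length_less_card_pieces[OF span Vs Ws \<open>V \<in> set Vs\<close> not_in]
  have "length Vs < length Us" by simp
  with max[OF Us] show False by simp
qed

lemma finest_adapted_decomp_exists:
  fixes S :: "('a::field ^ 'n) set"
  assumes "finite S" "vec.span S = UNIV"
  obtains Vs where "finest_adapted_decomp S Vs"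
proof -
  let ?P = "\<lambda>Us. adapted_decomp S Us \<and> (\<forall>U\<in>set Us. U \<noteq> {0})"
  have "(UNIV :: ('a ^ 'n) set) \<noteq> {0}" by (metis UNIV_I singletonD vec_eq_iff zero_index one_index zero_neq_one)
  then have UNIV: "?P [UNIV]" using adapted_decomp_UNIV by simp
  have bound: "\<forall>Us. ?P Us \<longrightarrow> length Us < Suc (card S)"
    using adapted_decomp_length_le_card[OF assms] by (simp add: less_Suc_eq_le)
  obtain Vs where Vs: "adapted_decomp S Vs" "\<forall>V\<in>set Vs. V \<noteq> {0}"
    and max: "\<forall>Us. ?P Us \<longrightarrow> length Us \<le> length Vs"
    using ex_has_greatest_nat[OF UNIV bound] by blast
  have "\<exists>W\<in>set Ws. V \<subseteq> W" if "adapted_decomp S Ws" "V \<in> set Vs" for Ws V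
    using adapted_decomp_max_length_summand_subset[OF assms(2) Vs _ that] max by blast
  then have "finest_adapted_decomp S Vs"
    unfolding finest_adapted_decomp_def using Vs by blast
  then show ?thesis by (rule that)
qed

lemma finest_adapted_decomp_summand_subset_imp_eq:
  assumes "finest_adapted_decomp S Vs" "j < length Vs" "k < length Vs" "Vs ! j \<subseteq> Vs ! k"
  shows "j = k"
  using is_direct_sum_decomp_summand_subset_imp_eq[of Vs j k] assms nth_mem[OF assms(2)]
  unfolding finest_adapted_decomp_def adapted_decomp_def by blast

lemma finest_adapted_decomp_distinct:
  assumes "finest_adapted_decomp S Vs"
  shows "distinct Vs"
  unfolding distinct_conv_nth
  using finest_adapted_decomp_summand_subset_imp_eq[OF assms] by blast

lemma finest_adapted_decomp_set_subset:
  assumes Vs: "finest_adapted_decomp S Vs" and Ws: "finest_adapted_decomp S Ws"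
  shows "set Vs \<subseteq> set Ws"
proof
  fix V assume "V \<in> set Vs"
  then obtain W V' where W: "W \<in> set Ws" "V \<subseteq> W" and V': "V' \<in> set Vs" "W \<subseteq> V'"
    using Vs Ws unfolding finest_adapted_decomp_def by meson
  obtain j k where "j < length Vs" "V = Vs ! j" "k < length Vs" "V' = Vs ! k"
    using \<open>V \<in> set Vs\<close> V'(1) by (metis in_set_conv_nth)
  with finest_adapted_decomp_summand_subset_imp_eq[OF Vs] W(2) V'(2) have "V = V'" by blast
  with W V' show "V \<in> set Ws" by auto
qed

lemma finest_adapted_decomp_unique:
  assumes "finest_adapted_decomp S Vs" "finest_adapted_decomp S Ws"
  shows "mset Vs = mset Ws"
  using finest_adapted_decomp_set_subset[OF assms] finest_adapted_decomp_set_subset[OF assms(2,1)]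
    finest_adapted_decomp_distinct[OF assms(1)] finest_adapted_decomp_distinct[OF assms(2)]
  by (simp add: set_eq_iff_mset_eq_distinct)

lemma span_columns_eq_UNIV_if_full_rank:
  fixes A :: "'a::field ^ 'm ^ 'n"
  assumes "rank A = CARD('n)"
  shows "vec.span (columns A) = UNIV"
proof -
  have rows: "rows A = range (\<lambda>i. row i A)" by (auto simp: rows_def)
  have dim: "vec.dim (rows A) = CARD('n)" using assms by (simp add: row_rank_def_gen)
  have "CARD('n) \<le> card (rows A)"
    using vec.dim_le_card[OF vec.span_superset, of "rows A"] dim by (simp add: rows)
  moreover have "card (rows A) \<le> CARD('n)" unfolding rows by (rule card_image_le) simp
  ultimately have card: "card (rows A) = CARD('n)" by linarith
  then have inj: "inj (\<lambda>i. row i A)" unfolding rows by (simp add: eq_card_imp_inj_on)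
  have indep: "vec.independent (rows A)"
    using vec.card_eq_dim[of "rows A" "rows A"] card dim by (simp add: rows vec.span_superset)
  have "c i = 0" if "(\<Sum>i\<in>UNIV. c i *s row i A) = 0" for c i
  proof -
    let ?c = "\<lambda>v. c (inv (\<lambda>i. row i A) v)"
    have "(\<Sum>v\<in>rows A. ?c v *s v) = (\<Sum>i\<in>UNIV. c i *s row i A)"
      unfolding rows by (simp add: sum.reindex[OF inj] inv_f_f[OF inj])
    then have "\<forall>v\<in>rows A. ?c v = 0"
      using that indep unfolding vec.independent_explicit by (elim conjE allE[of _ ?c]) simp
    then show "c i = 0" by (simp add: rows inv_f_f[OF inj])
  qed
  then have "\<exists>B. A ** B = mat 1" by (simp add: matrix_right_invertible_independent_rows)
  then show ?thesis by (simp add: matrix_right_invertible_span_columns)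
qed

theorem lemma3p5:
  fixes A :: "complex ^ 'm ^ 'n"
  assumes full_rank: "rank A = CARD('n)"
    and pairwise_indep: "\<And>i j x y. i \<noteq> j \<Longrightarrow>
           x *s column i A + y *s column j A = 0 \<Longrightarrow> x = 0 \<and> y = 0"
  shows "\<exists>Vs. (is_direct_sum_decomp Vs \<and> (\<forall>V \<in> set Vs. V \<noteq> {0}) \<and>
               columns_in_summands A Vs \<and>
               (\<forall>Ws. is_direct_sum_decomp Ws \<and> columns_in_summands A Ws \<longrightarrow>
                     (\<forall>V \<in> set Vs. \<exists>W \<in> set Ws. V \<subseteq> W)))
          \<and> (\<forall>Vs'. is_direct_sum_decomp Vs' \<and> (\<forall>V \<in> set Vs'. V \<noteq> {0}) \<and>
                    columns_in_summands A Vs' \<and>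
                    (\<forall>Ws. is_direct_sum_decomp Ws \<and> columns_in_summands A Ws \<longrightarrow>
                          (\<forall>V \<in> set Vs'. \<exists>W \<in> set Ws. V \<subseteq> W))
                 \<longrightarrow> mset Vs' = mset Vs)"
proof -
  have columns: "columns_in_summands A Vs \<longleftrightarrow> (\<forall>x\<in>columns A. \<exists>V\<in>set Vs. x \<in> V)" for Vs
    by (auto simp: columns_in_summands_def columns_def)
  have finest: "finest_adapted_decomp (columns A) Vs \<longleftrightarrow>
      is_direct_sum_decomp Vs \<and> (\<forall>V \<in> set Vs. V \<noteq> {0}) \<and> columns_in_summands A Vs \<and>
      (\<forall>Ws. is_direct_sum_decomp Ws \<and> columns_in_summands A Ws \<longrightarrow>
            (\<forall>V \<in> set Vs. \<exists>W \<in> set Ws. V \<subseteq> W))" for Vs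
    unfolding finest_adapted_decomp_def adapted_decomp_def columns by blast
  have "finite (columns A)" unfolding columns_def by (simp add: full_SetCompr_eq)
  then obtain Vs where "finest_adapted_decomp (columns A) Vs"
    using finest_adapted_decomp_exists span_columns_eq_UNIV_if_full_rank[OF full_rank] by blast
  with finest_adapted_decomp_unique show ?thesis
    unfolding finest[symmetric] by blast
qed

end
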